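(* For each $n\ge1$ let $(B_n,X^n(0),Y^n)$ be a random element of $\overline{\mathbb{R}}_+\times\mathbb{R}^2\times D^2$, and let $(\hat X^n,\hat V^n)\in D^2\times D^2$ be the unique solution of \begin{align*} \hat{X}_1^n(t) &= X_1^n(0) + Y^{n}_1(t) + \int_0^t(-\hat{X}_1^n(s)+\hat{X}_2^n(s))\,ds - \hat{V}_1^n(t), \\ \hat{X}_2^n(t) &= X_2^n(0) + Y^{n}_2(t) - \int_0^t\hat{X}_2^n(s)\,ds +\hat{V}_1^n(t)- \hat{V}_2^n(t), \end{align*} with $\hat X_1^n\le0$, $\hat X_2^n\le B_n$, $\hat V_1^n,\hat V_2^n$ nondecreasing nonnegative, $\int_0^\infty \mathbb{1}\{\hat{X}_1^n(t) < 0\}\,d\hat{V}_1^n(t)=0$ and $\int_0^\infty \mathbb{1}\{\hat{X}_2^n(t) < B_n\}\,d\hat{V}_2^n(t)=0$. If the sequences $(X^n(0))_{n\ge1}$ and $(Y_i^n)_{n\ge1}$, $i=1,2$, are stochastically bounded, then $(\hat X^n)_{n\ge1}$ is stochastically bounded in $D^2$ (no boundedness of $B_n$ is required).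
   Context: A sequence of random elements $Z^n$ of $D$ (or $D^k$) is stochastically bounded if for every $t>0$ the sequence of real random variables $\|Z^n\|_t=\sup_{0\le s\le t}|Z^n(s)|$ (max over coordinates for $D^k$) is tight; a sequence of random vectors in $\mathbb{R}^k$ is stochastically bounded if it is tight. $D=D([0,\infty),\mathbb{R})$; $\overline{\mathbb{R}}_+=[0,\infty)\cup\{\infty\}$. *)

theory Defs
  imports "HOL-Probability.Probability"
begin

text \<open>Paths on [0,infinity) are modelled as functions real => real; only t >= 0 matters.\<close>

definition cadlag :: "(real \<Rightarrow> real) \<Rightarrow> bool" where
  "cadlag f \<longleftrightarrow> (\<forall>t\<ge>0. continuous (at_right t) f \<and> (0 < t \<longrightarrow> (\<exists>l. (f \<longlongrightarrow> l) (at_left t))))"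

text \<open>Random element of D (on probability space M): cadlag paths, measurable coordinates
  (the Skorokhod Borel sigma-algebra on D is generated by the coordinate projections).\<close>
definition random_element_D :: "'a measure \<Rightarrow> ('a \<Rightarrow> real \<Rightarrow> real) \<Rightarrow> bool" where
  "random_element_D M Z \<longleftrightarrow>
     (\<forall>\<omega>\<in>space M. cadlag (Z \<omega>)) \<and> (\<forall>t\<ge>0. (\<lambda>\<omega>. Z \<omega> t) \<in> borel_measurable M)"

text \<open>Tightness of a sequence of real random variables xi n defined on probability spaces M n.
  Formulated with outer probability so that it does not depend on measurability.\<close>
definition stoch_bounded_rv :: "(nat \<Rightarrow> 'a measure) \<Rightarrow> (nat \<Rightarrow> 'a \<Rightarrow> real) \<Rightarrow> bool" where
  "stoch_bounded_rv M \<xi> \<longleftrightarrow>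
     (\<forall>\<epsilon>>0. \<exists>K. \<forall>n. \<exists>A\<in>sets (M n).
        {\<omega>\<in>space (M n). K < \<bar>\<xi> n \<omega>\<bar>} \<subseteq> A \<and> measure (M n) A \<le> \<epsilon>)"

definition sup_norm :: "(real \<Rightarrow> real) \<Rightarrow> real \<Rightarrow> real" where
  "sup_norm f t = (SUP s\<in>{0..t}. \<bar>f s\<bar>)"

definition stoch_bounded_D :: "(nat \<Rightarrow> 'a measure) \<Rightarrow> (nat \<Rightarrow> 'a \<Rightarrow> real \<Rightarrow> real) \<Rightarrow> bool" where
  "stoch_bounded_D M Z \<longleftrightarrow> (\<forall>t>0. stoch_bounded_rv M (\<lambda>n \<omega>. sup_norm (Z n \<omega>) t))"

definition stoch_bounded_D2 :: "(nat \<Rightarrow> 'a measure) \<Rightarrow> (nat \<Rightarrow> 'a \<Rightarrow> real \<Rightarrow> real)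
    \<Rightarrow> (nat \<Rightarrow> 'a \<Rightarrow> real \<Rightarrow> real) \<Rightarrow> bool" where
  "stoch_bounded_D2 M Z1 Z2 \<longleftrightarrow>
     (\<forall>t>0. stoch_bounded_rv M (\<lambda>n \<omega>. max (sup_norm (Z1 n \<omega>) t) (sup_norm (Z2 n \<omega>) t)))"

text \<open>Lebesgue--Stieltjes measure dV on [0,infinity) of a nondecreasing nonnegative cadlag V,
  with the convention V(0-) = 0 (so a jump at time 0 carries mass V(0)).\<close>
definition LS_measure :: "(real \<Rightarrow> real) \<Rightarrow> real measure" where
  "LS_measure V = interval_measure (\<lambda>t. if t < 0 then 0 else V t)"

end

theory Submission
  imports Defs
begin

text \<open>Fix a horizon T and let K bound |X_i(0) + Y_i| on [0,T]. The regulator V1 grows only while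
  X1 = 0 and V2 only while X2 = B; at such times the equations bound V1 by K plus a drift integral,
  and V2 by 2K, two drift integrals and V1, using nothing about B except X2 = B \<ge> 0 there. With
  H = sup (|X1 s| + |X2 s|) e^(-8s) over [0,T] the drift integrals up to time t are at most
  H e^(8t)/8, which yields |X1 t| + |X2 t| \<le> 5K + (5/8) H e^(8t) and hence H \<le> (40/3) K. This
  pathwise bound is uniform in n and in the sample point, so tightness of the data carries over to
  the solutions.\<close>

lemma cadlag_locally_bounded:
  assumes "cadlag f" "0 \<le> x"
  shows "\<exists>d C. d > 0 \<and> (\<forall>y. 0 \<le> y \<longrightarrow> dist y x < d \<longrightarrow> \<bar>f y\<bar> \<le> C)"
proof -
  have "(f \<longlongrightarrow> f x) (at_right x)"
    using assms unfolding cadlag_def by (simp add: continuous_within)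
  hence "eventually (\<lambda>y. dist (f y) (f x) < 1) (at_right x)" by (rule tendstoD) simp
  then obtain b1 where b1: "b1 > x" "\<forall>y>x. y < b1 \<longrightarrow> dist (f y) (f x) < 1"
    using eventually_at_right[of x "x+1"] by auto
  obtain b2 C2 where b2: "b2 < x" "\<forall>y>b2. y < x \<longrightarrow> 0 \<le> y \<longrightarrow> \<bar>f y\<bar> \<le> C2"
  proof (cases "x = 0")
    case True
    show ?thesis by (rule that[of "-1" 0]) (use True in auto)
  next
    case False
    with assms obtain l where "(f \<longlongrightarrow> l) (at_left x)" unfolding cadlag_def by force
    hence "eventually (\<lambda>y. dist (f y) l < 1) (at_left x)" by (rule tendstoD) simp
    then obtain b where "b < x" "\<forall>y>b. y < x \<longrightarrow> dist (f y) l < 1"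
      using eventually_at_left[of "x - 1" x] by auto
    then show ?thesis
      by (intro that[of b "\<bar>l\<bar> + 1"]) (auto simp: dist_real_def)
  qed
  show ?thesis
  proof (intro exI conjI allI impI)
    show "min (b1 - x) (x - b2) > 0" using b1 b2 by auto
    fix y assume y: "0 \<le> y" "dist y x < min (b1 - x) (x - b2)"
    consider "y < x" | "y = x" | "y > x" by linarith
    then show "\<bar>f y\<bar> \<le> max (\<bar>f x\<bar> + 1) C2"
      by cases (use b1 b2 y in \<open>auto simp: dist_real_def\<close>)
  qed
qed

lemma cadlag_bounded_on_Icc:
  assumes "cadlag f"
  shows "\<exists>C. \<forall>s\<in>{0..T}. \<bar>f s\<bar> \<le> C"
proof -
  obtain d C where dC: "\<And>x. x \<in> {0..T} \<Longrightarrow>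
      d x > 0 \<and> (\<forall>y. 0 \<le> y \<longrightarrow> dist y x < d x \<longrightarrow> \<bar>f y\<bar> \<le> C x)"
    using cadlag_locally_bounded[OF assms] by (metis atLeastAtMost_iff)
  have "{0..T} \<subseteq> (\<Union>x\<in>{0..T}. ball x (d x))" using dC by force
  then obtain D where D: "D \<subseteq> {0..T}" "finite D" "{0..T} \<subseteq> (\<Union>x\<in>D. ball x (d x))"
    using compactE_image[OF compact_Icc, of "{0..T}" "\<lambda>x. ball x (d x)"] by blast
  show ?thesis
  proof (intro exI ballI)
    fix s assume s: "s \<in> {0..T}"
    then obtain x where x: "x \<in> D" "s \<in> ball x (d x)" using D by auto
    have "\<bar>f s\<bar> \<le> C x" using dC[of x] x D s by (auto simp: dist_commute)
    also have "\<dots> \<le> (\<Sum>z\<in>D. \<bar>C z\<bar>)" using D x by (intro order.trans[OF _ member_le_sum]) auto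
    finally show "\<bar>f s\<bar> \<le> (\<Sum>z\<in>D. \<bar>C z\<bar>)" .
  qed
qed

lemma dyadic_ceiling_bounds:
  fixes y :: real
  shows "y \<le> real_of_int \<lceil>y * 2^n\<rceil> / 2^n" and "real_of_int \<lceil>y * 2^n\<rceil> / 2^n \<le> y + (1/2)^n"
proof -
  show "y \<le> real_of_int \<lceil>y * 2^n\<rceil> / 2^n" by (simp add: pos_le_divide_eq)
  have "real_of_int \<lceil>y * 2^n\<rceil> \<le> y * 2^n + 1" using ceiling_correct[of "y * 2^n"] by linarith
  hence "real_of_int \<lceil>y * 2^n\<rceil> / 2^n \<le> (y * 2^n + 1) / 2^n" by (intro divide_right_mono) auto
  also have "\<dots> = y + (1/2)^n" by (simp add: add_divide_distrib power_one_over)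
  finally show "real_of_int \<lceil>y * 2^n\<rceil> / 2^n \<le> y + (1/2)^n" .
qed

text \<open>Approximating the argument from the right by dyadic points uses only right continuity and
  exhibits f as a pointwise limit of countably-valued, hence measurable, functions.\<close>
lemma cadlag_borel_measurable:
  assumes "cadlag f"
  shows "(\<lambda>x. f (max x 0)) \<in> borel_measurable borel"
proof (rule borel_measurable_LIMSEQ_real)
  let ?c = "\<lambda>(n::nat) (x::real). real_of_int \<lceil>max x 0 * 2^n\<rceil> / 2^n"
  show "(\<lambda>x. f (?c n x)) \<in> borel_measurable borel" for n
  proof -
    have "(\<lambda>x::real. \<lceil>max x 0 * 2^n\<rceil>) \<in> measurable borel (count_space (UNIV::int set))"
    proof (subst measurable_count_space_eq2_countable, intro conjI ballI)
      fix k :: int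
      have "(\<lambda>x::real. \<lceil>max x 0 * 2^n\<rceil>) -` {k} \<inter> space borel
         = {x::real. of_int k - 1 < max x 0 * 2^n \<and> max x 0 * 2^n \<le> of_int k}"
        using ceiling_correct by (auto simp: ceiling_eq_iff)
      also have "\<dots> \<in> sets borel" by measurable
      finally show "(\<lambda>x::real. \<lceil>max x 0 * 2^n\<rceil>) -` {k} \<inter> space borel \<in> sets borel" .
    qed auto
    then show ?thesis
      using measurable_compose_countable[where f="\<lambda>(i::int) x. f (real_of_int i / 2^n)"] by simp
  qed
  fix x :: real
  define y where "y = max x 0"
  have y: "0 \<le> y" by (simp add: y_def)
  have cl: "y \<le> ?c n x" and cu: "?c n x \<le> y + (1/2)^n" for n
    using dyadic_ceiling_bounds[of y n] by (simp_all add: y_def)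
  have mem: "?c n x \<in> {y..y+1}" for n
    using cl[of n] cu[of n] power_le_one[of "1/2 :: real" n] by simp
  have "(\<lambda>n. y + (1/2)^n) \<longlonglongrightarrow> y + 0" by (intro tendsto_intros) simp
  hence upper: "(\<lambda>n. y + (1/2)^n) \<longlonglongrightarrow> y" by simp
  have lim: "(\<lambda>n. ?c n x) \<longlonglongrightarrow> y"
    by (rule real_tendsto_sandwich[OF always_eventually always_eventually tendsto_const upper])
       (use cl cu in blast)+
  have "continuous (at_right y) f" using assms y unfolding cadlag_def by blast
  hence "continuous (at y within {y..y+1}) f" by (simp add: at_within_Icc_at_right)
  hence "(f \<circ> (\<lambda>n. ?c n x)) \<longlonglongrightarrow> f y"
    using mem lim unfolding continuous_within_sequentially by (metis (no_types, lifting))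
  thus "(\<lambda>n. f (?c n x)) \<longlonglongrightarrow> f (max x 0)" by (simp add: y_def o_def)
qed

lemma cadlag_integrable_on:
  assumes "cadlag f"
  shows "f integrable_on {0..T}"
proof -
  obtain C where C: "\<forall>s\<in>{0..T}. \<bar>f s\<bar> \<le> C" using cadlag_bounded_on_Icc[OF assms] by blast
  have "(\<lambda>x. f (max x 0)) \<in> borel_measurable (lebesgue_on {0..T})"
    using measurable_comp[OF id_borel_measurable_lebesgue_on cadlag_borel_measurable[OF assms]]
    by (simp add: o_def)
  hence "(\<lambda>x. f (max x 0)) absolutely_integrable_on {0..T}"
    by (rule measurable_bounded_by_integrable_imp_absolutely_integrable[where g="\<lambda>_. C"])
       (use C in auto)
  hence "(\<lambda>x. f (max x 0)) integrable_on {0..T}" by (simp add: absolutely_integrable_on_def)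
  thus ?thesis by (rule integrable_eq) auto
qed

lemma sup_norm_le:
  assumes "0 \<le> T" "\<And>s. 0 \<le> s \<Longrightarrow> s \<le> T \<Longrightarrow> \<bar>f s\<bar> \<le> C"
  shows "sup_norm f T \<le> C"
  unfolding sup_norm_def using assms by (intro cSUP_least) auto

lemma abs_le_sup_norm:
  assumes "cadlag f" "0 \<le> s" "s \<le> T"
  shows "\<bar>f s\<bar> \<le> sup_norm f T"
proof -
  obtain C where "\<forall>s\<in>{0..T}. \<bar>f s\<bar> \<le> C" using cadlag_bounded_on_Icc[OF assms(1)] by blast
  hence "bdd_above ((\<lambda>s. \<bar>f s\<bar>) ` {0..T})" by (intro bdd_aboveI2) auto
  thus ?thesis unfolding sup_norm_def using assms by (intro cSUP_upper) auto
qed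

lemma stoch_bounded_rv_dominated:
  assumes "stoch_bounded_rv M \<xi>"
    and "\<And>K n \<omega>. \<omega> \<in> space (M n) \<Longrightarrow> \<bar>\<xi> n \<omega>\<bar> \<le> K \<Longrightarrow> \<bar>\<zeta> n \<omega>\<bar> \<le> F K"
  shows "stoch_bounded_rv M \<zeta>"
  unfolding stoch_bounded_rv_def
proof (intro allI impI)
  fix e :: real assume "0 < e"
  then obtain K where K: "\<forall>n. \<exists>A\<in>sets (M n). {\<omega>\<in>space (M n). K < \<bar>\<xi> n \<omega>\<bar>} \<subseteq> A \<and> measure (M n) A \<le> e"
    using assms(1) unfolding stoch_bounded_rv_def by blast
  have "{\<omega>\<in>space (M n). F K < \<bar>\<zeta> n \<omega>\<bar>} \<subseteq> {\<omega>\<in>space (M n). K < \<bar>\<xi> n \<omega>\<bar>}" for n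
  proof (intro subsetI CollectI conjI)
    fix \<omega> assume "\<omega> \<in> {\<omega>\<in>space (M n). F K < \<bar>\<zeta> n \<omega>\<bar>}"
    then show "\<omega> \<in> space (M n)" "K < \<bar>\<xi> n \<omega>\<bar>" using assms(2)[of \<omega> n K] by force+
  qed
  with K show "\<exists>K. \<forall>n. \<exists>A\<in>sets (M n). {\<omega>\<in>space (M n). K < \<bar>\<zeta> n \<omega>\<bar>} \<subseteq> A \<and> measure (M n) A \<le> e"
    by (meson order.trans)
qed

lemma stoch_bounded_rv_max:
  assumes "stoch_bounded_rv M \<xi>" "stoch_bounded_rv M \<eta>"
  shows "stoch_bounded_rv M (\<lambda>n \<omega>. max \<bar>\<xi> n \<omega>\<bar> \<bar>\<eta> n \<omega>\<bar>)"
  unfolding stoch_bounded_rv_def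
proof (intro allI impI)
  fix e :: real assume "0 < e"
  then obtain K1 K2 where
    K1: "\<forall>n. \<exists>A\<in>sets (M n). {\<omega>\<in>space (M n). K1 < \<bar>\<xi> n \<omega>\<bar>} \<subseteq> A \<and> measure (M n) A \<le> e / 2" and
    K2: "\<forall>n. \<exists>A\<in>sets (M n). {\<omega>\<in>space (M n). K2 < \<bar>\<eta> n \<omega>\<bar>} \<subseteq> A \<and> measure (M n) A \<le> e / 2"
    using assms unfolding stoch_bounded_rv_def by (meson half_gt_zero)
  have "\<exists>A\<in>sets (M n). {\<omega>\<in>space (M n). max K1 K2 < \<bar>max \<bar>\<xi> n \<omega>\<bar> \<bar>\<eta> n \<omega>\<bar>\<bar>} \<subseteq> A
      \<and> measure (M n) A \<le> e" for n
  proof -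
    obtain A1 A2 where A: "A1 \<in> sets (M n)" "A2 \<in> sets (M n)"
      "{\<omega>\<in>space (M n). K1 < \<bar>\<xi> n \<omega>\<bar>} \<subseteq> A1" "{\<omega>\<in>space (M n). K2 < \<bar>\<eta> n \<omega>\<bar>} \<subseteq> A2"
      "measure (M n) A1 \<le> e / 2" "measure (M n) A2 \<le> e / 2"
      using K1 K2 by meson
    have "measure (M n) (A1 \<union> A2) \<le> e" using measure_Un_le[OF A(1,2)] A(5,6) by linarith
    moreover have "{\<omega>\<in>space (M n). max K1 K2 < \<bar>max \<bar>\<xi> n \<omega>\<bar> \<bar>\<eta> n \<omega>\<bar>\<bar>} \<subseteq> A1 \<union> A2"
    proof
      fix \<omega> assume "\<omega> \<in> {\<omega>\<in>space (M n). max K1 K2 < \<bar>max \<bar>\<xi> n \<omega>\<bar> \<bar>\<eta> n \<omega>\<bar>\<bar>}"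
      then have "\<omega> \<in> space (M n)" "K1 < \<bar>\<xi> n \<omega>\<bar> \<or> K2 < \<bar>\<eta> n \<omega>\<bar>" by auto
      then show "\<omega> \<in> A1 \<union> A2" using A(3,4) by blast
    qed
    ultimately show ?thesis using A(1,2) by blast
  qed
  then show "\<exists>K. \<forall>n. \<exists>A\<in>sets (M n).
      {\<omega>\<in>space (M n). K < \<bar>max \<bar>\<xi> n \<omega>\<bar> \<bar>\<eta> n \<omega>\<bar>\<bar>} \<subseteq> A \<and> measure (M n) A \<le> e"
    by blast
qed

locale LS_null_set =
  fixes V :: "real \<Rightarrow> real" and S :: "real set"
  assumes cadlag: "cadlag V"
    and mono: "\<And>s t. 0 \<le> s \<Longrightarrow> s \<le> t \<Longrightarrow> V s \<le> V t"
    and nonneg: "\<And>t. 0 \<le> t \<Longrightarrow> 0 \<le> V t"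
    and null: "(\<integral>\<^sup>+ t. indicator S t \<partial>LS_measure V) = 0"
begin

definition F :: "real \<Rightarrow> real" where
  "F t = (if t < 0 then 0 else V t)"

lemma F_mono: "x \<le> y \<Longrightarrow> F x \<le> F y"
  unfolding F_def using mono nonneg by auto

lemma F_right_continuous: "continuous (at_right a) F"
proof (cases "a < 0")
  case True
  have "eventually (\<lambda>y. F y = 0) (at_right a)"
    using eventually_at_right[of a 0] True by (auto simp: F_def intro!: exI[of _ 0])
  hence "(F \<longlongrightarrow> 0) (at_right a)" by (rule tendsto_eventually)
  thus ?thesis using True by (simp add: continuous_within F_def)
next
  case False
  hence "(V \<longlongrightarrow> V a) (at_right a)" using cadlag unfolding cadlag_def by (simp add: continuous_within)
  moreover have "eventually (\<lambda>y. V y = F y) (at_right a)"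
    using False eventually_at_right_less[of a] by (auto simp: F_def elim: eventually_mono)
  ultimately have "(F \<longlongrightarrow> V a) (at_right a)" by (rule Lim_transform_eventually)
  thus ?thesis using False by (simp add: continuous_within F_def)
qed

lemma LS_measure_eq: "LS_measure V = interval_measure F"
  unfolding LS_measure_def F_def by simp

lemma emeasure_Ioc: "a \<le> b \<Longrightarrow> emeasure (LS_measure V) {a<..b} = ennreal (F b - F a)"
  unfolding LS_measure_eq by (rule emeasure_interval_measure_Ioc) (auto intro: F_mono F_right_continuous)

lemma emeasure_null_subset: "A \<in> sets borel \<Longrightarrow> A \<subseteq> S \<Longrightarrow> emeasure (LS_measure V) A = 0"
proof -
  assume A: "A \<in> sets borel" "A \<subseteq> S"
  have "emeasure (LS_measure V) A = (\<integral>\<^sup>+ t. indicator A t \<partial>LS_measure V)"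
    using A by (simp add: LS_measure_eq)
  also have "\<dots> \<le> (\<integral>\<^sup>+ t. indicator S t \<partial>LS_measure V)"
    using A by (intro nn_integral_mono) (auto split: split_indicator)
  finally show ?thesis using null by simp
qed

lemma emeasure_Icc:
  assumes "a \<le> b"
  shows "emeasure (LS_measure V) {a..b} = (INF k. ennreal (F b - F (a - 1 / Suc k)))"
proof -
  let ?A = "\<lambda>k::nat. {a - 1 / Suc k<..b}"
  have le: "a - 1 / Suc k \<le> b" for k :: nat
  proof -
    have "0 \<le> 1 / real (Suc k)" by simp
    thus ?thesis using assms by linarith
  qed
  have Ioc: "(\<lambda>k. emeasure (LS_measure V) (?A k)) = (\<lambda>k. ennreal (F b - F (a - 1 / Suc k)))"
    by (rule ext) (rule emeasure_Ioc[OF le])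
  have "(INF k. emeasure (LS_measure V) (?A k)) = emeasure (LS_measure V) (\<Inter>k. ?A k)"
  proof (rule INF_emeasure_decseq)
    show "range ?A \<subseteq> sets (LS_measure V)" by (auto simp: LS_measure_eq)
    show "decseq ?A"
    proof (rule decseq_SucI)
      fix n :: nat
      have "1 / real (Suc (Suc n)) \<le> 1 / real (Suc n)"
        using frac_le[of 1 1 "real (Suc n)" "real (Suc (Suc n))"] by simp
      thus "?A (Suc n) \<subseteq> ?A n" by auto
    qed
    show "emeasure (LS_measure V) (?A k) \<noteq> \<infinity>" for k
      by (subst emeasure_Ioc[OF le]) simp
  qed
  also have "(\<Inter>k. ?A k) = {a..b}"
  proof auto
    fix x assume A: "\<forall>k. a - 1 / (1 + real k) < x"
    show "a \<le> x"
    proof (rule ccontr)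
      assume "\<not> a \<le> x"
      hence "a - x > 0" by simp
      then obtain k where k: "inverse (real (Suc k)) < a - x" using reals_Archimedean by blast
      have "a - 1 / (1 + real k) < x" using A by blast
      thus False using k by (simp add: inverse_eq_divide)
    qed
  next
    fix x k assume "a \<le> x"
    moreover have "0 < 1 / (1 + real k)" by simp
    ultimately show "a - 1 / (1 + real k) < x" by linarith
  qed
  finally show ?thesis unfolding Ioc by simp
qed

lemma constant_on_null_interval:
  assumes "0 \<le> s" "s \<le> t" "{s<..t} \<subseteq> S"
  shows "V t = V s"
proof -
  have "ennreal (F t - F s) = 0" using emeasure_null_subset[OF _ assms(3)] emeasure_Ioc[OF assms(2)] by simp
  hence "F t - F s \<le> 0" by (simp add: ennreal_eq_0_iff)
  with mono[OF assms(1,2)] show ?thesis using assms by (auto simp: F_def)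
qed

text \<open>The convention V(0-) = 0 lets dV charge a jump at time 0.\<close>
lemma vanishes_on_null_initial_interval:
  assumes "0 \<le> t" "{0..t} \<subseteq> S"
  shows "V t = 0"
proof -
  have "(INF k. ennreal (F t - F (0 - 1 / Suc k))) = 0"
    using emeasure_null_subset[OF _ assms(2)] emeasure_Icc[OF assms(1)] by simp
  hence "F t \<le> 0" by (simp add: F_def ennreal_eq_0_iff)
  thus ?thesis using assms nonneg[of t] by (auto simp: F_def)
qed

lemma left_continuous_at_null_point:
  assumes "0 \<le> s" "s \<in> S" "e > 0"
  shows "\<exists>d>0. \<forall>r. 0 \<le> r \<longrightarrow> s - d < r \<longrightarrow> r < s \<longrightarrow> V s - V r \<le> e"
proof -
  have "(INF k. ennreal (F s - F (s - 1 / Suc k))) = 0"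
    using emeasure_null_subset[of "{s..s}"] emeasure_Icc[of s s] assms by simp
  hence "(INF k. ennreal (F s - F (s - 1 / Suc k))) < ennreal e" using assms by simp
  then obtain k where "ennreal (F s - F (s - 1 / Suc k)) < ennreal e"
    by (auto simp: INF_less_iff)
  hence k: "F s - F (s - 1 / Suc k) < e" by (metis ennreal_leI not_le)
  show ?thesis
  proof (intro exI conjI allI impI)
    show "1 / real (Suc k) > 0" by simp
    fix r assume r: "0 \<le> r" "s - 1 / real (Suc k) < r" "r < s"
    have "F (s - 1 / Suc k) \<le> F r" using r by (intro F_mono) simp
    thus "V s - V r \<le> e" using k r assms by (simp add: F_def)
  qed
qed

text \<open>Skorokhod's argument: go back to the last time r \<le> t outside S. Then V is flat on (r,t],
  and if r itself lies in S, V does not jump at r, so V r is a limit of values outside S.\<close>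
lemma le_if_le_outside_null_set:
  assumes t: "0 \<le> t" and m: "0 \<le> m"
    and outside: "\<And>r. 0 \<le> r \<Longrightarrow> r \<le> t \<Longrightarrow> r \<notin> S \<Longrightarrow> V r \<le> m"
  shows "V t \<le> m"
proof (cases "{0..t} \<subseteq> S")
  case True
  thus ?thesis using vanishes_on_null_initial_interval[OF t] m by simp
next
  case False
  define R where "R = {r. 0 \<le> r \<and> r \<le> t \<and> r \<notin> S}"
  define s where "s = Sup R"
  have ne: "R \<noteq> {}" using False by (auto simp: R_def)
  have bdd: "bdd_above R" by (auto simp: R_def bdd_above_def)
  have sR: "r \<le> s" if "r \<in> R" for r using cSup_upper[OF that bdd] by (simp add: s_def)
  have st: "s \<le> t" unfolding s_def by (rule cSup_least[OF ne]) (auto simp: R_def)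
  have s0: "0 \<le> s" using ne sR by (force simp: R_def)
  have "{s<..t} \<subseteq> S"
  proof
    fix r assume "r \<in> {s<..t}"
    then show "r \<in> S" using sR[of r] s0 by (force simp: R_def)
  qed
  hence Vt: "V t = V s" by (rule constant_on_null_interval[OF s0 st])
  show ?thesis
  proof (cases "s \<in> S")
    case False
    thus ?thesis using outside[OF s0 st] Vt by simp
  next
    case True
    have "V s \<le> m"
    proof (rule field_le_epsilon)
      fix e :: real assume "0 < e"
      then obtain d where d: "d > 0" "\<forall>r. 0 \<le> r \<longrightarrow> s - d < r \<longrightarrow> r < s \<longrightarrow> V s - V r \<le> e"
        using left_continuous_at_null_point[OF s0 True] by blast
      have "s - d < Sup R" using d(1) by (simp add: s_def)
      then obtain r where r: "r \<in> R" "s - d < r" using less_cSup_iff[OF ne bdd] by blast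
      have "r \<noteq> s" using r(1) True by (auto simp: R_def)
      hence "r < s" using sR[OF r(1)] by simp
      hence "V s - V r \<le> e" using d r by (auto simp: R_def)
      moreover have "V r \<le> m" using outside r by (auto simp: R_def)
      ultimately show "V s \<le> m + e" by simp
    qed
    thus ?thesis using Vt by simp
  qed
qed

end

lemma abs_integral_le_exp_bound:
  fixes f :: "real \<Rightarrow> real"
  assumes "f integrable_on {0..r}" "0 \<le> r" "0 < k"
    and f: "\<And>s. s \<in> {0..r} \<Longrightarrow> \<bar>f s\<bar> \<le> H * exp (k * s)"
  shows "\<bar>integral {0..r} f\<bar> \<le> H * exp (k * r) / k"
proof -
  have "((\<lambda>s. H * exp (k * s)) has_integral (H * exp (k * r) / k - H * exp (k * 0) / k)) {0..r}"
    (is "(?h has_integral _) _")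
  proof (rule fundamental_theorem_of_calculus[OF assms(2)])
    fix s :: real
    have "((\<lambda>s. H * exp (k * s) / k) has_real_derivative H * exp (k * s)) (at s)"
      using assms(3) by (auto intro!: derivative_eq_intros)
    thus "((\<lambda>s. H * exp (k * s) / k) has_vector_derivative H * exp (k * s)) (at s within {0..r})"
      by (simp add: has_real_derivative_iff_has_vector_derivative has_vector_derivative_at_within)
  qed
  hence "norm (integral {0..r} f) \<le> H * exp (k * r) / k - H / k"
    using integral_norm_bound_integral[OF assms(1), of ?h] f by (simp add: has_integral_iff)
  moreover have "0 \<le> H" using f[of 0] assms(2) by (simp add: order.trans[OF abs_ge_zero])
  moreover have "0 \<le> H / k" using \<open>0 \<le> H\<close> assms(3) by simp
  ultimately show ?thesis by simp
qed

text \<open>Gronwall-type closure for the exponentially weighted supremum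
  H = sup (g s * e^(-k s)) over [0,T], which is finite because g is bounded.\<close>
lemma exp_weighted_sup_bound:
  fixes g :: "real \<Rightarrow> real"
  assumes "0 \<le> T" "0 \<le> k" "0 \<le> a" "c < 1"
    and g_nonneg: "\<And>s. s \<in> {0..T} \<Longrightarrow> 0 \<le> g s"
    and g_bdd: "bdd_above (g ` {0..T})"
    and step: "\<And>H t. (\<And>s. s \<in> {0..T} \<Longrightarrow> g s \<le> H * exp (k * s)) \<Longrightarrow> t \<in> {0..T} \<Longrightarrow>
        g t \<le> a + c * H * exp (k * t)"
    and t: "t \<in> {0..T}"
  shows "g t \<le> a / (1 - c) * exp (k * T)"
proof -
  define H where "H = (SUP s\<in>{0..T}. g s * exp (- k * s))"
  have decay: "exp (- k * s) \<le> 1" if "s \<in> {0..T}" for s using that assms(2) by auto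
  from g_bdd obtain C where "\<forall>x\<in>g ` {0..T}. x \<le> C" unfolding bdd_above_def by blast
  hence "bdd_above ((\<lambda>s. g s * exp (- k * s)) ` {0..T})"
    using decay g_nonneg by (intro bdd_aboveI2[where M=C]) (meson imageI mult_left_le order.trans)
  hence weighted: "g s * exp (- k * s) \<le> H" if "s \<in> {0..T}" for s
    unfolding H_def by (rule cSUP_upper[OF that])
  have gH: "g s \<le> H * exp (k * s)" if "s \<in> {0..T}" for s
  proof -
    have "exp (- k * s) * exp (k * s) = 1" by (simp add: exp_minus)
    hence "g s = g s * exp (- k * s) * exp (k * s)" by (metis mult.assoc mult.right_neutral)
    also have "\<dots> \<le> H * exp (k * s)" by (rule mult_right_mono[OF weighted[OF that]]) simp
    finally show ?thesis .
  qed
  have H0: "0 \<le> H" using weighted[of 0] g_nonneg[of 0] assms(1) by simp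
  have "H \<le> a + c * H"
    unfolding H_def
  proof (rule cSUP_least)
    show "{0..T} \<noteq> {}" using assms(1) by simp
    fix s assume s: "s \<in> {0..T}"
    have "g s * exp (- k * s) \<le> (a + c * H * exp (k * s)) * exp (- k * s)"
      using step[OF gH s] by (intro mult_right_mono) auto
    also have "\<dots> = a * exp (- k * s) + c * H"
      by (simp add: algebra_simps mult.assoc exp_minus_inverse)
    also have "\<dots> \<le> a + c * H" using decay[OF s] assms(3) by (simp add: mult_left_le)
    finally show "g s * exp (- k * s) \<le> a + c * (SUP s\<in>{0..T}. g s * exp (- k * s))"
      by (simp add: H_def)
  qed
  hence "H \<le> a / (1 - c)" using assms(4) by (simp add: field_simps)
  have "g t \<le> H * exp (k * t)" by (rule gH[OF t])
  also have "\<dots> \<le> H * exp (k * T)" using H0 t assms(2) by (intro mult_left_mono) (auto intro: mult_left_mono)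
  also have "\<dots> \<le> a / (1 - c) * exp (k * T)" by (rule mult_right_mono[OF \<open>H \<le> a / (1 - c)\<close>]) simp
  finally show ?thesis .
qed

locale reflected_system =
  fixes x1 x2 v1 v2 z1 z2 :: "real \<Rightarrow> real" and b :: ereal
  assumes cadlag_x1: "cadlag x1" and cadlag_x2: "cadlag x2"
    and cadlag_v1: "cadlag v1" and cadlag_v2: "cadlag v2"
    and eq1: "\<And>t. 0 \<le> t \<Longrightarrow> x1 t = z1 t + integral {0..t} (\<lambda>s. - x1 s + x2 s) - v1 t"
    and eq2: "\<And>t. 0 \<le> t \<Longrightarrow> x2 t = z2 t - integral {0..t} x2 + v1 t - v2 t"
    and x1_le: "\<And>t. 0 \<le> t \<Longrightarrow> x1 t \<le> 0"
    and x2_le: "\<And>t. 0 \<le> t \<Longrightarrow> ereal (x2 t) \<le> b"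
    and b_nonneg: "0 \<le> b"
    and v1_mono: "\<And>s t. 0 \<le> s \<Longrightarrow> s \<le> t \<Longrightarrow> v1 s \<le> v1 t"
    and v2_mono: "\<And>s t. 0 \<le> s \<Longrightarrow> s \<le> t \<Longrightarrow> v2 s \<le> v2 t"
    and v1_nonneg: "\<And>t. 0 \<le> t \<Longrightarrow> 0 \<le> v1 t"
    and v2_nonneg: "\<And>t. 0 \<le> t \<Longrightarrow> 0 \<le> v2 t"
    and compl1: "(\<integral>\<^sup>+ t. indicator {t. 0 \<le> t \<and> x1 t < 0} t \<partial>LS_measure v1) = 0"
    and compl2: "(\<integral>\<^sup>+ t. indicator {t. 0 \<le> t \<and> ereal (x2 t) < b} t \<partial>LS_measure v2) = 0"

sublocale reflected_system \<subseteq> reg1: LS_null_set v1 "{t. 0 \<le> t \<and> x1 t < 0}"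
  using cadlag_v1 v1_mono v1_nonneg compl1 by unfold_locales

sublocale reflected_system \<subseteq> reg2: LS_null_set v2 "{t. 0 \<le> t \<and> ereal (x2 t) < b}"
  using cadlag_v2 v2_mono v2_nonneg compl2 by unfold_locales

context reflected_system
begin

lemma pointwise_bound:
  assumes t: "0 \<le> t"
    and z: "\<And>s. 0 \<le> s \<Longrightarrow> s \<le> t \<Longrightarrow> \<bar>z1 s\<bar> \<le> K \<and> \<bar>z2 s\<bar> \<le> K"
    and H: "\<And>s. 0 \<le> s \<Longrightarrow> s \<le> t \<Longrightarrow> \<bar>x1 s\<bar> + \<bar>x2 s\<bar> \<le> H * exp (8 * s)"
  shows "\<bar>x1 t\<bar> + \<bar>x2 t\<bar> \<le> 5 * K + 5 / 8 * H * exp (8 * t)"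
proof -
  define E where "E = H * exp (8 * t) / 8"
  have K0: "0 \<le> K" using z[of 0] t by auto
  have "0 \<le> \<bar>x1 0\<bar> + \<bar>x2 0\<bar>" by simp
  hence H0: "0 \<le> H" using H[of 0] t by simp
  have drift: "\<bar>integral {0..r} f\<bar> \<le> E"
    if r: "0 \<le> r" "r \<le> t" and "f integrable_on {0..r}"
      and f: "\<And>s. 0 \<le> s \<Longrightarrow> s \<le> r \<Longrightarrow> \<bar>f s\<bar> \<le> \<bar>x1 s\<bar> + \<bar>x2 s\<bar>" for f r
  proof -
    have "\<bar>integral {0..r} f\<bar> \<le> H * exp (8 * r) / 8"
      using f H r by (intro abs_integral_le_exp_bound[OF that(3) r(1)]) force+
    also have "\<dots> \<le> E" unfolding E_def using H0 r by (intro divide_right_mono mult_left_mono) auto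
    finally show ?thesis .
  qed
  have I1: "\<bar>integral {0..r} (\<lambda>s. - x1 s + x2 s)\<bar> \<le> E" if "0 \<le> r" "r \<le> t" for r
  proof (rule drift[OF that])
    show "(\<lambda>s. - x1 s + x2 s) integrable_on {0..r}"
      by (intro integrable_add integrable_neg cadlag_integrable_on cadlag_x1 cadlag_x2)
  qed auto
  have I2: "\<bar>integral {0..r} x2\<bar> \<le> E" if "0 \<le> r" "r \<le> t" for r
    by (rule drift[OF that]) (auto intro: cadlag_integrable_on cadlag_x2)
  have v1t: "v1 t \<le> K + E"
  proof (rule reg1.le_if_le_outside_null_set[OF t])
    show "0 \<le> K + E" using K0 H0 by (simp add: E_def)
    fix r assume r: "0 \<le> r" "r \<le> t" "r \<notin> {t. 0 \<le> t \<and> x1 t < 0}"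
    hence "x1 r = 0" using x1_le[of r] by auto
    thus "v1 r \<le> K + E" using eq1[OF r(1)] z[OF r(1,2)] I1[OF r(1,2)] by (auto simp: abs_le_iff)
  qed
  have v2t: "v2 t \<le> 2 * K + 2 * E"
  proof (rule reg2.le_if_le_outside_null_set[OF t])
    show "0 \<le> 2 * K + 2 * E" using K0 H0 by (simp add: E_def)
    fix r assume r: "0 \<le> r" "r \<le> t" "r \<notin> {t. 0 \<le> t \<and> ereal (x2 t) < b}"
    hence "ereal (x2 r) = b" using x2_le[of r] by auto
    hence "0 \<le> x2 r" using b_nonneg by (metis ereal_less_eq(5))
    moreover have "v1 r \<le> v1 t" using v1_mono r by auto
    ultimately show "v2 r \<le> 2 * K + 2 * E"
      using eq2[OF r(1)] z[OF r(1,2)] I2[OF r(1,2)] v1t by (auto simp: abs_le_iff)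
  qed
  have "\<bar>x1 t\<bar> \<le> 2 * K + 2 * E"
    using eq1[OF t] x1_le[OF t] z[OF t order.refl] I1[OF t order.refl] v1_nonneg[OF t] v1t
    by (auto simp: abs_le_iff)
  moreover have "\<bar>x2 t\<bar> \<le> 3 * K + 3 * E"
    using eq2[OF t] z[OF t order.refl] I2[OF t order.refl] v1_nonneg[OF t] v2_nonneg[OF t] v1t v2t
    by (auto simp: abs_le_iff)
  ultimately show ?thesis by (simp add: E_def)
qed

text \<open>The weight e^(8t) makes the drift contribute only 5/8 < 1 of the weighted supremum.\<close>
lemma path_bound:
  assumes T: "0 \<le> T" and z: "\<And>s. 0 \<le> s \<Longrightarrow> s \<le> T \<Longrightarrow> \<bar>z1 s\<bar> \<le> K \<and> \<bar>z2 s\<bar> \<le> K"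
    and t: "0 \<le> t" "t \<le> T"
  shows "\<bar>x1 t\<bar> + \<bar>x2 t\<bar> \<le> 40 / 3 * K * exp (8 * T)"
proof -
  have K0: "0 \<le> K" using z[of 0] T by auto
  obtain C1 C2 where "\<forall>s\<in>{0..T}. \<bar>x1 s\<bar> \<le> C1" "\<forall>s\<in>{0..T}. \<bar>x2 s\<bar> \<le> C2"
    using cadlag_bounded_on_Icc[OF cadlag_x1] cadlag_bounded_on_Icc[OF cadlag_x2] by blast
  hence bdd: "bdd_above ((\<lambda>s. \<bar>x1 s\<bar> + \<bar>x2 s\<bar>) ` {0..T})"
    by (intro bdd_aboveI2[where M="C1 + C2"]) (simp add: add_mono)
  have "\<bar>x1 t\<bar> + \<bar>x2 t\<bar> \<le> 5 * K / (1 - 5 / 8) * exp (8 * T)"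
  proof (rule exp_weighted_sup_bound[where g="\<lambda>s. \<bar>x1 s\<bar> + \<bar>x2 s\<bar>"])
    fix H s assume "\<And>s. s \<in> {0..T} \<Longrightarrow> \<bar>x1 s\<bar> + \<bar>x2 s\<bar> \<le> H * exp (8 * s)" "s \<in> {0..T}"
    then show "\<bar>x1 s\<bar> + \<bar>x2 s\<bar> \<le> 5 * K + 5 / 8 * H * exp (8 * s)"
      by (intro pointwise_bound) (use z in auto)
  qed (use T t K0 bdd in auto)
  then show ?thesis by simp
qed

lemma sup_norm_bound:
  assumes T: "0 \<le> T" and z: "\<And>s. 0 \<le> s \<Longrightarrow> s \<le> T \<Longrightarrow> \<bar>z1 s\<bar> \<le> K \<and> \<bar>z2 s\<bar> \<le> K"
  shows "\<bar>max (sup_norm x1 T) (sup_norm x2 T)\<bar> \<le> 40 / 3 * K * exp (8 * T)"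
proof -
  have "sup_norm x1 T \<le> 40 / 3 * K * exp (8 * T)" "sup_norm x2 T \<le> 40 / 3 * K * exp (8 * T)"
    using path_bound[OF T z] by (intro sup_norm_le[OF T]; force)+
  moreover have "0 \<le> sup_norm x1 T"
    using abs_le_sup_norm[OF cadlag_x1 order.refl T] by (simp add: order.trans[OF abs_ge_zero])
  ultimately show ?thesis by simp
qed

end

theorem mainTheorem7:
  fixes M :: "nat \<Rightarrow> 'a measure"
    and B :: "nat \<Rightarrow> 'a \<Rightarrow> ereal"
    and X01 X02 :: "nat \<Rightarrow> 'a \<Rightarrow> real"
    and Y1 Y2 X1 X2 V1 V2 :: "nat \<Rightarrow> 'a \<Rightarrow> real \<Rightarrow> real"
  assumes prob: "\<And>n. n \<ge> 1 \<Longrightarrow> prob_space (M n)"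
    and B_rv: "\<And>n. n \<ge> 1 \<Longrightarrow> B n \<in> borel_measurable (M n)"
    and B_nonneg: "\<And>n \<omega>. n \<ge> 1 \<Longrightarrow> \<omega> \<in> space (M n) \<Longrightarrow> 0 \<le> B n \<omega>"
    and X01_rv: "\<And>n. n \<ge> 1 \<Longrightarrow> X01 n \<in> borel_measurable (M n)"
    and X02_rv: "\<And>n. n \<ge> 1 \<Longrightarrow> X02 n \<in> borel_measurable (M n)"
    and Y1_rv: "\<And>n. n \<ge> 1 \<Longrightarrow> random_element_D (M n) (Y1 n)"
    and Y2_rv: "\<And>n. n \<ge> 1 \<Longrightarrow> random_element_D (M n) (Y2 n)"
    and sol_D: "\<And>n \<omega>. n \<ge> 1 \<Longrightarrow> \<omega> \<in> space (M n) \<Longrightarrow>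
        cadlag (X1 n \<omega>) \<and> cadlag (X2 n \<omega>) \<and> cadlag (V1 n \<omega>) \<and> cadlag (V2 n \<omega>)"
    and eq1: "\<And>n \<omega> t. n \<ge> 1 \<Longrightarrow> \<omega> \<in> space (M n) \<Longrightarrow> 0 \<le> t \<Longrightarrow>
        X1 n \<omega> t = X01 n \<omega> + Y1 n \<omega> t
          + integral {0..t} (\<lambda>s. - X1 n \<omega> s + X2 n \<omega> s) - V1 n \<omega> t"
    and eq2: "\<And>n \<omega> t. n \<ge> 1 \<Longrightarrow> \<omega> \<in> space (M n) \<Longrightarrow> 0 \<le> t \<Longrightarrow>
        X2 n \<omega> t = X02 n \<omega> + Y2 n \<omega> t
          - integral {0..t} (\<lambda>s. X2 n \<omega> s) + V1 n \<omega> t - V2 n \<omega> t"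
    and X1_le: "\<And>n \<omega> t. n \<ge> 1 \<Longrightarrow> \<omega> \<in> space (M n) \<Longrightarrow> 0 \<le> t \<Longrightarrow> X1 n \<omega> t \<le> 0"
    and X2_le: "\<And>n \<omega> t. n \<ge> 1 \<Longrightarrow> \<omega> \<in> space (M n) \<Longrightarrow> 0 \<le> t \<Longrightarrow>
        ereal (X2 n \<omega> t) \<le> B n \<omega>"
    and V1_mono: "\<And>n \<omega> s t. n \<ge> 1 \<Longrightarrow> \<omega> \<in> space (M n) \<Longrightarrow> 0 \<le> s \<Longrightarrow> s \<le> t \<Longrightarrow>
        V1 n \<omega> s \<le> V1 n \<omega> t"
    and V2_mono: "\<And>n \<omega> s t. n \<ge> 1 \<Longrightarrow> \<omega> \<in> space (M n) \<Longrightarrow> 0 \<le> s \<Longrightarrow> s \<le> t \<Longrightarrow>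
        V2 n \<omega> s \<le> V2 n \<omega> t"
    and V1_nonneg: "\<And>n \<omega> t. n \<ge> 1 \<Longrightarrow> \<omega> \<in> space (M n) \<Longrightarrow> 0 \<le> t \<Longrightarrow> 0 \<le> V1 n \<omega> t"
    and V2_nonneg: "\<And>n \<omega> t. n \<ge> 1 \<Longrightarrow> \<omega> \<in> space (M n) \<Longrightarrow> 0 \<le> t \<Longrightarrow> 0 \<le> V2 n \<omega> t"
    and compl1: "\<And>n \<omega>. n \<ge> 1 \<Longrightarrow> \<omega> \<in> space (M n) \<Longrightarrow>
        (\<integral>\<^sup>+ t. indicator {t. 0 \<le> t \<and> X1 n \<omega> t < 0} t \<partial>LS_measure (V1 n \<omega>)) = 0"
    and compl2: "\<And>n \<omega>. n \<ge> 1 \<Longrightarrow> \<omega> \<in> space (M n) \<Longrightarrow>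
        (\<integral>\<^sup>+ t. indicator {t. 0 \<le> t \<and> ereal (X2 n \<omega> t) < B n \<omega>} t \<partial>LS_measure (V2 n \<omega>)) = 0"
    and X0_sb: "stoch_bounded_rv (\<lambda>n. M (Suc n)) (\<lambda>n \<omega>. max \<bar>X01 (Suc n) \<omega>\<bar> \<bar>X02 (Suc n) \<omega>\<bar>)"
    and Y1_sb: "stoch_bounded_D (\<lambda>n. M (Suc n)) (\<lambda>n. Y1 (Suc n))"
    and Y2_sb: "stoch_bounded_D (\<lambda>n. M (Suc n)) (\<lambda>n. Y2 (Suc n))"
  shows "stoch_bounded_D2 (\<lambda>n. M (Suc n)) (\<lambda>n. X1 (Suc n)) (\<lambda>n. X2 (Suc n))"
proof -
  have "stoch_bounded_rv (\<lambda>n. M (Suc n))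
      (\<lambda>n \<omega>. max (sup_norm (X1 (Suc n) \<omega>) T) (sup_norm (X2 (Suc n) \<omega>) T))" if T: "0 < T" for T
  proof (rule stoch_bounded_rv_dominated[where F="\<lambda>K. 80 / 3 * K * exp (8 * T)"])
    show "stoch_bounded_rv (\<lambda>n. M (Suc n)) (\<lambda>n \<omega>. max
        (abs (max \<bar>X01 (Suc n) \<omega>\<bar> \<bar>X02 (Suc n) \<omega>\<bar>))
        (abs (max \<bar>sup_norm (Y1 (Suc n) \<omega>) T\<bar> \<bar>sup_norm (Y2 (Suc n) \<omega>) T\<bar>)))"
      by (rule stoch_bounded_rv_max[OF X0_sb stoch_bounded_rv_max])
         (use Y1_sb Y2_sb T in \<open>auto simp: stoch_bounded_D_def\<close>)
    fix K n \<omega>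
    assume \<omega>: "\<omega> \<in> space (M (Suc n))"
      and K: "abs (max (abs (max \<bar>X01 (Suc n) \<omega>\<bar> \<bar>X02 (Suc n) \<omega>\<bar>))
        (abs (max \<bar>sup_norm (Y1 (Suc n) \<omega>) T\<bar> \<bar>sup_norm (Y2 (Suc n) \<omega>) T\<bar>))) \<le> K"
    have n: "1 \<le> Suc n" by simp
    interpret reflected_system "X1 (Suc n) \<omega>" "X2 (Suc n) \<omega>" "V1 (Suc n) \<omega>" "V2 (Suc n) \<omega>"
      "\<lambda>t. X01 (Suc n) \<omega> + Y1 (Suc n) \<omega> t" "\<lambda>t. X02 (Suc n) \<omega> + Y2 (Suc n) \<omega> t" "B (Suc n) \<omega>"
      using sol_D[OF n \<omega>] eq1[OF n \<omega>] eq2[OF n \<omega>] X1_le[OF n \<omega>] X2_le[OF n \<omega>] B_nonneg[OF n \<omega>]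
        V1_mono[OF n \<omega>] V2_mono[OF n \<omega>] V1_nonneg[OF n \<omega>] V2_nonneg[OF n \<omega>]
        compl1[OF n \<omega>] compl2[OF n \<omega>]
      by unfold_locales auto
    have "\<bar>X01 (Suc n) \<omega> + Y1 (Suc n) \<omega> s\<bar> \<le> 2 * K \<and> \<bar>X02 (Suc n) \<omega> + Y2 (Suc n) \<omega> s\<bar> \<le> 2 * K"
      if "0 \<le> s" "s \<le> T" for s
    proof -
      have "\<bar>Y1 (Suc n) \<omega> s\<bar> \<le> sup_norm (Y1 (Suc n) \<omega>) T" "\<bar>Y2 (Suc n) \<omega> s\<bar> \<le> sup_norm (Y2 (Suc n) \<omega>) T"
        using Y1_rv[OF n] Y2_rv[OF n] \<omega> that by (auto intro!: abs_le_sup_norm simp: random_element_D_def)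
      then show ?thesis using K by (auto simp: abs_le_iff max_def split: if_splits)
    qed
    then have "\<bar>max (sup_norm (X1 (Suc n) \<omega>) T) (sup_norm (X2 (Suc n) \<omega>) T)\<bar> \<le> 40 / 3 * (2 * K) * exp (8 * T)"
      using T by (intro sup_norm_bound) auto
    then show "\<bar>max (sup_norm (X1 (Suc n) \<omega>) T) (sup_norm (X2 (Suc n) \<omega>) T)\<bar> \<le> 80 / 3 * K * exp (8 * T)"
      by simp
  qed
  then show ?thesis unfolding stoch_bounded_D2_def by blast
qed

end
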